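(* The norm $A\mapsto \frac{1}{n}\omega_*(A)$ is the maximum element of the class of $L$-norms $\||\cdot\||$ on $\mathbb{M}_n$ satisfying $\||A\||\le\|A\|_\infty$ for all $A\in\mathbb{M}_n$.
   Context: $\mathbb{M}_n$ is the algebra of complex $n\times n$ matrices with identity $I$; $\|\cdot\|_\infty$ is the operator norm, $\omega(A)=\sup\{|\langle x,Ax\rangle|:\|x\|=1\}$ the numerical radius, and $\omega_*(Y)=\sup\{|\mathrm{Tr}(Y^*X)|:\omega(X)\le1\}$ its dual norm. A norm $\||\cdot\||$ on $\mathbb{M}_n$ is an $L$-norm if $\sum_{i=1}^k\||C_iXC_i^*\||\le\||X\||$ for all $k$, all $X$ and all $C_i$ with $\sum_{i=1}^k C_i^*C_i=I$. *)

theory Defs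
  imports "HOL-Analysis.Analysis"
begin

text \<open>Complex n x n matrices are modelled as complex^'n^'n with 'n a finite type, n = CARD('n).
  The vector norm on complex^'n is the library Euclidean norm.\<close>

type_synonym 'n cmat = "complex^'n^'n"

definition cinner :: "complex^'n::finite \<Rightarrow> complex^'n \<Rightarrow> complex" where
  "cinner x y = (\<Sum>i\<in>UNIV. cnj (x $ i) * y $ i)"

definition madj :: "'n::finite cmat \<Rightarrow> 'n cmat" where
  "madj A = (\<chi> i j. cnj (A $ j $ i))"

definition mtrace :: "'n::finite cmat \<Rightarrow> complex" where
  "mtrace A = (\<Sum>i\<in>UNIV. A $ i $ i)"

definition msmult :: "complex \<Rightarrow> 'n::finite cmat \<Rightarrow> 'n cmat" where
  "msmult c A = (\<chi> i j. c * A $ i $ j)"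

definition op_norm :: "'n::finite cmat \<Rightarrow> real" where
  "op_norm A = Sup {norm (A *v x) | x. norm x = 1}"

definition num_radius :: "'n::finite cmat \<Rightarrow> real" where
  "num_radius A = Sup {cmod (cinner x (A *v x)) | x. norm x = 1}"

definition dual_num_radius :: "'n::finite cmat \<Rightarrow> real" where
  "dual_num_radius Y = Sup {cmod (mtrace (madj Y ** X)) | X. num_radius X \<le> 1}"

definition is_matrix_norm :: "('n::finite cmat \<Rightarrow> real) \<Rightarrow> bool" where
  "is_matrix_norm N \<longleftrightarrow>
     (\<forall>A. 0 \<le> N A) \<and> (\<forall>A. N A = 0 \<longleftrightarrow> A = 0) \<and>
     (\<forall>c A. N (msmult c A) = cmod c * N A) \<and>
     (\<forall>A B. N (A + B) \<le> N A + N B)"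

definition is_L_norm :: "('n::finite cmat \<Rightarrow> real) \<Rightarrow> bool" where
  "is_L_norm N \<longleftrightarrow> is_matrix_norm N \<and>
     (\<forall>(k::nat) (C::nat \<Rightarrow> 'n cmat) X.
        (\<Sum>i<k. madj (C i) ** C i) = mat 1 \<longrightarrow>
        (\<Sum>i<k. N (C i ** X ** madj (C i))) \<le> N X)"

end

theory Submission
  imports Defs
begin

text \<open>Writing \<open>n = CARD('n)\<close>, the trace pairing makes \<open>\<omega>\<^sub>*\<close> the norm dual to \<open>\<omega>\<close>.
  It is an \<open>L\<close>-norm because \<open>Y \<mapsto> \<Sum> C\<^sub>i\<^sup>* Y\<^sub>i C\<^sub>i\<close> maps numerical-radius unit balls into
  the unit ball when \<open>\<Sum> C\<^sub>i\<^sup>* C\<^sub>i = I\<close>. It is at most \<open>n \<parallel>\<cdot>\<parallel>\<^sub>\<infinity>\<close> because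
  \<open>|Tr(A\<^sup>*X)| \<le> \<parallel>A\<parallel>\<^sub>\<infinity> Tr|X|\<close> and \<open>Tr|X| = Tr(XU)\<close> for a unitary \<open>U\<close>; in an eigenbasis
  of \<open>U\<close> this trace is a sum of \<open>n\<close> unimodular multiples of values \<open>\<langle>r, X r\<rangle>\<close>, each bounded
  by \<open>\<omega>(X)\<close>.
  Conversely, compressing \<open>I\<close> by \<open>C\<^sub>i = x e\<^sub>i\<^sup>*\<close> shows \<open>n M(xx\<^sup>*) \<le> M(I)\<close> for every \<open>L\<close>-norm
  \<open>M\<close>, so a Hahn--Banach functional norming \<open>A\<close> for \<open>M\<close> has numerical radius at most
  \<open>M(I)/n\<close>, whence \<open>M(A) \<le> M(I) \<omega>\<^sub>*(A) / n\<close>.\<close>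

definition cscale :: "complex \<Rightarrow> complex^'n \<Rightarrow> complex^'n" where
  "cscale c x = (\<chi> i. c * x $ i)"

definition outer_prod :: "complex^'n::finite \<Rightarrow> complex^'n \<Rightarrow> 'n cmat" where
  "outer_prod x y = (\<chi> i j. x $ i * cnj (y $ j))"

definition orthonormal_on :: "'i set \<Rightarrow> ('i \<Rightarrow> complex^'n::finite) \<Rightarrow> bool" where
  "orthonormal_on J q \<longleftrightarrow> (\<forall>i\<in>J. \<forall>j\<in>J. cinner (q i) (q j) = (if i = j then 1 else 0))"

definition common_eigenvector :: "'n::finite cmat \<Rightarrow> complex^'n \<Rightarrow> bool" where
  "common_eigenvector Z v \<longleftrightarrow> (\<exists>\<alpha>. Z *v v = cscale \<alpha> v \<and> madj Z *v v = cscale (cnj \<alpha>) v)"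

definition unitary :: "'n::finite cmat \<Rightarrow> bool" where
  "unitary U \<longleftrightarrow> madj U ** U = mat 1"

lemma cscale_nth [simp]: "cscale c x $ i = c * x $ i"
  by (simp add: cscale_def)

lemma cscale_cscale: "cscale c (cscale d x) = cscale (c * d) x"
  by (simp add: vec_eq_iff)

lemma cscale_one [simp]: "cscale 1 x = x"
  by (simp add: vec_eq_iff)

lemma cscale_zero [simp]: "cscale 0 x = 0"
  by (simp add: vec_eq_iff)

lemma scaleR_eq_cscale: "r *\<^sub>R (x::complex^'n) = cscale (of_real r) x"
  by (simp add: vec_eq_iff) (simp add: scaleR_conv_of_real)

lemma cinner_add_right: "cinner x (y + z) = cinner x y + cinner x z"
  by (simp add: cinner_def distrib_left sum.distrib)

lemma cinner_cscale_right: "cinner x (cscale c y) = c * cinner x y"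
  by (simp add: cinner_def sum_distrib_left algebra_simps)

lemma cinner_cscale_left: "cinner (cscale c x) y = cnj c * cinner x y"
  by (simp add: cinner_def sum_distrib_left algebra_simps)

lemma cinner_scaleR_right: "cinner x (r *\<^sub>R y) = of_real r * cinner x y"
  by (simp add: scaleR_eq_cscale cinner_cscale_right)

lemma cinner_zero_right [simp]: "cinner x 0 = 0"
  by (simp add: cinner_def)

lemma cinner_sum_right: "cinner x (sum f S) = (\<Sum>i\<in>S. cinner x (f i))"
  by (induction S rule: infinite_finite_induct) (auto simp: cinner_add_right)

lemma cinner_commute: "cinner y x = cnj (cinner x y)"
  by (simp add: cinner_def mult.commute)

lemma cinner_axis_left: "cinner (axis i 1) y = y $ i"
proof -
  have "cinner (axis i 1) y = (\<Sum>k\<in>UNIV. if k = i then y $ k else 0)"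
    unfolding cinner_def by (rule sum.cong) (auto simp: axis_def)
  then show ?thesis by simp
qed

lemma Re_cinner: "Re (cinner x y) = inner x y"
  by (simp add: cinner_def inner_vec_def inner_complex_def Re_sum)

lemma cinner_self: "cinner x x = of_real ((norm x)\<^sup>2)"
proof -
  have "cinner x x = (\<Sum>i\<in>UNIV. of_real ((cmod (x$i))\<^sup>2))"
    unfolding cinner_def
    by (rule sum.cong) (auto simp: mult.commute simp flip: complex_norm_square)
  also have "\<dots> = of_real ((norm x)\<^sup>2)"
    unfolding norm_vec_def L2_set_def by (simp add: sum_nonneg)
  finally show ?thesis .
qed

lemma norm_eq_if_cinner_self_eq: "cinner a a = cinner b b \<Longrightarrow> norm a = norm b"
  by (metis cinner_self of_real_eq_iff norm_ge_zero power2_eq_iff_nonneg)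

lemma norm_eq_1_if_cinner_self: "cinner x x = 1 \<Longrightarrow> norm x = 1"
proof -
  assume "cinner x x = 1"
  then have "complex_of_real ((norm x)\<^sup>2) = complex_of_real (1\<^sup>2)"
    using cinner_self[of x] by (simp only: one_power2 of_real_1)
  then have "(norm x)\<^sup>2 = 1\<^sup>2" by (simp only: of_real_eq_iff)
  then show ?thesis using norm_ge_zero[of x] by (auto simp: power2_eq_1_iff)
qed

lemma cnj_sgn_mult_self: "cnj (sgn z) * z = of_real (cmod z)"
proof (cases "z = 0")
  case False
  have "cnj (sgn z) * z = cnj z * z / of_real (cmod z)"
    by (simp add: sgn_div_norm divide_inverse mult.commute mult.left_commute scaleR_conv_of_real)
  also have "cnj z * z = of_real (cmod z) ^ 2"
    by (simp add: mult.commute flip: complex_norm_square)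
  finally show ?thesis using False by (simp add: power2_eq_square)
qed simp

lemma norm_cscale: "norm (cscale c x) = cmod c * norm x"
proof -
  have "of_real ((norm (cscale c x))\<^sup>2) = cinner (cscale c x) (cscale c x)"
    by (simp add: cinner_self)
  also have "\<dots> = cnj c * c * cinner x x"
    by (simp add: cinner_cscale_left cinner_cscale_right)
  also have "\<dots> = of_real ((cmod c * norm x)\<^sup>2)"
    by (simp add: cinner_self power_mult_distrib mult.commute flip: complex_norm_square)
  finally have "(norm (cscale c x))\<^sup>2 = (cmod c * norm x)\<^sup>2"
    using of_real_eq_iff by blast
  then show ?thesis by (simp add: power2_eq_iff_nonneg)
qed

lemma cmod_cinner_le: "cmod (cinner x y) \<le> norm x * norm y"
proof (cases "cinner x y = 0")
  case False
  define c where "c = cnj (sgn (cinner x y))"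
  have "cmod (cinner x y) = inner x (cscale c y)"
    by (simp add: c_def cnj_sgn_mult_self cinner_cscale_right flip: Re_cinner)
  also have "\<dots> \<le> norm x * norm (cscale c y)" by (rule norm_cauchy_schwarz)
  also have "norm (cscale c y) = norm y"
    using False by (simp add: c_def norm_cscale norm_sgn)
  finally show ?thesis .
qed simp

lemma obtain_unit_vector:
  assumes "x \<noteq> 0"
  obtains u where "norm u = 1" and "x = cscale (of_real (norm x)) u"
proof
  show "norm (cscale (of_real (1 / norm x)) x) = 1"
    using assms by (simp add: norm_cscale norm_divide)
  show "x = cscale (of_real (norm x)) (cscale (of_real (1 / norm x)) x)"
    using assms by (simp add: cscale_cscale)
qed

lemma madj_nth [simp]: "madj A $ i $ j = cnj (A $ j $ i)"
  by (simp add: madj_def)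

lemma madj_madj [simp]: "madj (madj A) = A"
  by (simp add: vec_eq_iff)

lemma madj_mult: "madj (A ** B) = madj B ** madj A"
  by (simp add: vec_eq_iff matrix_matrix_mult_def mult.commute)

lemma madj_add: "madj (A + B) = madj A + madj B"
  by (simp add: vec_eq_iff)

lemma madj_zero [simp]: "madj 0 = 0"
  by (simp add: vec_eq_iff)

lemma madj_sum: "madj (sum f S) = (\<Sum>i\<in>S. madj (f i))"
  by (induction S rule: infinite_finite_induct) (auto simp: madj_add)

lemma msmult_nth [simp]: "msmult c A $ i $ j = c * A $ i $ j"
  by (simp add: msmult_def)

lemma madj_msmult: "madj (msmult c A) = msmult (cnj c) (madj A)"
  by (simp add: vec_eq_iff)

lemma cinner_madj_right: "cinner x (madj A *v y) = cinner (A *v x) y"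
  unfolding cinner_def matrix_vector_mult_def
  by (simp add: sum_distrib_left sum_distrib_right ac_simps) (rule sum.swap)

lemma cinner_madj_left: "cinner (madj A *v x) y = cinner x (A *v y)"
  using cinner_madj_right[of x "madj A" y] by simp

lemma mtrace_add: "mtrace (A + B) = mtrace A + mtrace B"
  by (simp add: mtrace_def sum.distrib)

lemma mtrace_msmult: "mtrace (msmult c A) = c * mtrace A"
  by (simp add: mtrace_def sum_distrib_left)

lemma mtrace_zero [simp]: "mtrace 0 = 0"
  by (simp add: mtrace_def)

lemma mtrace_sum: "mtrace (sum f S) = (\<Sum>i\<in>S. mtrace (f i))"
  by (induction S rule: infinite_finite_induct) (auto simp: mtrace_add)

lemma mtrace_mult_commute: "mtrace (A ** B) = mtrace (B ** A)"
  unfolding mtrace_def matrix_matrix_mult_def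
  by (simp add: mult.commute) (rule sum.swap)

lemma mtrace_madj: "mtrace (madj A) = cnj (mtrace A)"
  by (simp add: mtrace_def)

lemma mtrace_madj_mult_commute: "mtrace (madj A ** B) = cnj (mtrace (madj B ** A))"
  by (metis madj_madj madj_mult mtrace_madj)

lemma msmult_mv: "msmult c A *v x = cscale c (A *v x)"
  by (simp add: vec_eq_iff matrix_vector_mult_def sum_distrib_left mult.assoc)

lemma mv_cscale: "A *v cscale c x = cscale c (A *v x)"
  by (simp add: vec_eq_iff matrix_vector_mult_def sum_distrib_left algebra_simps)

lemma mv_scaleR: "A *v (r *\<^sub>R x) = r *\<^sub>R (A *v (x::complex^'n::finite))"
  by (simp add: scaleR_eq_cscale mv_cscale)

lemma msmult_mult_right: "A ** msmult c B = msmult c (A ** B)"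
  by (simp add: vec_eq_iff matrix_matrix_mult_def sum_distrib_left algebra_simps)

lemma msmult_mult_left: "msmult c A ** B = msmult c (A ** B)"
  by (simp add: vec_eq_iff matrix_matrix_mult_def sum_distrib_left algebra_simps)

lemma msmult_msmult: "msmult c (msmult d A) = msmult (c * d) A"
  by (simp add: vec_eq_iff mult.assoc)

lemma msmult_one [simp]: "msmult 1 A = A"
  by (simp add: vec_eq_iff)

lemma msmult_zero [simp]: "msmult 0 A = 0"
  by (simp add: vec_eq_iff)

lemma scaleR_eq_msmult: "r *\<^sub>R (A::'n::finite cmat) = msmult (of_real r) A"
  by (simp add: vec_eq_iff) (simp add: scaleR_conv_of_real)

lemma mmult_add_right: "((A::'n::finite cmat) + B) ** C = A ** C + B ** C"
  by (simp add: vec_eq_iff matrix_matrix_mult_def distrib_right sum.distrib)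

lemma sum_mv: "sum f S *v x = (\<Sum>i\<in>S. f i *v x)"
  by (induction S rule: infinite_finite_induct) (auto simp: matrix_vector_mult_add_rdistrib)

lemma mmult_sum: "(A::'n::finite cmat) ** sum f S = (\<Sum>i\<in>S. A ** f i)"
  by (induction S rule: infinite_finite_induct) (auto simp: matrix_add_ldistrib)

lemma sum_mmult:
  fixes f :: "'a \<Rightarrow> 'n::finite cmat"
  shows "sum f S ** A = (\<Sum>i\<in>S. f i ** A)"
  by (induction S rule: infinite_finite_induct) (auto simp: mmult_add_right)

lemma mat_1_neq_0: "(mat 1 :: 'n::finite cmat) \<noteq> 0"
  by (simp add: vec_eq_iff mat_def)

lemma outer_prod_nth [simp]: "outer_prod x y $ i $ j = x $ i * cnj (y $ j)"
  by (simp add: outer_prod_def)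

lemma outer_prod_mv: "outer_prod x y *v z = cscale (cinner y z) x"
  by (simp add: vec_eq_iff matrix_vector_mult_def cinner_def sum_distrib_left algebra_simps)

lemma outer_prod_mult: "outer_prod a b ** outer_prod c d = msmult (cinner b c) (outer_prod a d)"
  by (simp add: vec_eq_iff matrix_matrix_mult_def cinner_def sum_distrib_left
      sum_distrib_right ac_simps)

lemma madj_outer_prod: "madj (outer_prod x y) = outer_prod y x"
  by (simp add: vec_eq_iff)

lemma mtrace_mult_outer_prod: "mtrace (B ** outer_prod x y) = cinner y (B *v x)"
  unfolding mtrace_def matrix_matrix_mult_def cinner_def matrix_vector_mult_def
  by (simp add: sum_distrib_left ac_simps)

lemma inner_eq_Re_mtrace: "inner a B = Re (mtrace (madj a ** B))"
  unfolding mtrace_def matrix_matrix_mult_def inner_vec_def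
  by (simp add: inner_complex_def) (rule sum.swap)

lemma mtrace_madj_mult_self: "mtrace (madj a ** a) = of_real ((norm a)\<^sup>2)"
proof -
  have "Re (mtrace (madj a ** a)) = (norm a)\<^sup>2"
    by (simp add: power2_norm_eq_inner flip: inner_eq_Re_mtrace)
  moreover have "Im (mtrace (madj a ** a)) = 0"
    unfolding mtrace_def matrix_matrix_mult_def by (simp add: Im_sum)
  ultimately show ?thesis by (simp add: complex_eq_iff)
qed

lemma ex_norm_eq_1: "\<exists>x::complex^'n::finite. norm x = 1"
proof
  show "norm (axis undefined (1::complex)) = 1" by (simp add: inner_axis' norm_eq_1)
qed

lemma norm_mv_bounded: "\<exists>K. \<forall>x. norm (A *v x) \<le> norm x * K" for A :: "'n::finite cmat"
  using bounded_linear.bounded[OF matrix_vector_mul_bounded_linear] .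

lemma op_norm_upper:
  fixes A :: "'n::finite cmat"
  assumes "norm x = 1"
  shows "norm (A *v x) \<le> op_norm A"
proof -
  obtain K where "\<forall>x. norm (A *v x) \<le> norm x * K" using norm_mv_bounded by blast
  then have "bdd_above {norm (A *v x) | x. norm x = 1}"
    by (intro bdd_aboveI[of _ K]) (auto, metis mult_1)
  then show ?thesis unfolding op_norm_def using assms by (auto intro: cSup_upper)
qed

lemma op_norm_nonneg: "0 \<le> op_norm A"
  using ex_norm_eq_1 op_norm_upper norm_ge_zero order_trans by metis

lemma norm_mv_le_op_norm: "norm (A *v x) \<le> op_norm A * norm x"
proof (cases "x = 0")
  case False
  then obtain u where u: "norm u = 1" and x: "x = cscale (of_real (norm x)) u"
    by (rule obtain_unit_vector)
  have "norm (A *v x) = norm x * norm (A *v u)"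
    by (subst x) (simp add: mv_cscale norm_cscale)
  also have "\<dots> \<le> norm x * op_norm A" using op_norm_upper[OF u] by (simp add: mult_left_mono)
  finally show ?thesis by (simp add: mult.commute)
qed simp

lemma op_norm_mat_1_le: "op_norm (mat 1 :: 'n::finite cmat) \<le> 1"
  unfolding op_norm_def by (rule cSup_least) (use ex_norm_eq_1 in auto)

lemma num_radius_upper:
  fixes A :: "'n::finite cmat"
  assumes "norm x = 1"
  shows "cmod (cinner x (A *v x)) \<le> num_radius A"
proof -
  obtain K where K: "\<forall>x. norm (A *v x) \<le> norm x * K" using norm_mv_bounded by blast
  have "cmod (cinner x (A *v x)) \<le> K" if "norm x = 1" for x
    using cmod_cinner_le[of x "A *v x"] K that by (metis mult_1 order_trans)
  then have "bdd_above {cmod (cinner x (A *v x)) | x. norm x = 1}"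
    by (auto intro: bdd_aboveI[of _ K])
  then show ?thesis unfolding num_radius_def using assms by (auto intro: cSup_upper)
qed

lemma num_radius_least:
  "(\<And>x. norm x = 1 \<Longrightarrow> cmod (cinner x (A *v x)) \<le> c) \<Longrightarrow> num_radius A \<le> c"
  unfolding num_radius_def by (rule cSup_least) (use ex_norm_eq_1 in auto)

lemma num_radius_nonneg: "0 \<le> num_radius A"
  using ex_norm_eq_1 num_radius_upper norm_ge_zero order_trans by metis

lemma num_radius_zero: "num_radius (0::'n::finite cmat) = 0"
  by (intro antisym num_radius_least) (auto simp: num_radius_nonneg)

lemma cmod_cinner_mv_le_num_radius: "cmod (cinner y (A *v y)) \<le> num_radius A * (norm y)\<^sup>2"
proof (cases "y = 0")
  case False
  then obtain u where u: "norm u = 1" and y: "y = cscale (of_real (norm y)) u"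
    by (rule obtain_unit_vector)
  have "cmod (cinner y (A *v y)) = (norm y)\<^sup>2 * cmod (cinner u (A *v u))"
    by (subst (1 2) y)
      (simp add: mv_cscale cinner_cscale_left cinner_cscale_right norm_mult power2_eq_square)
  also have "\<dots> \<le> (norm y)\<^sup>2 * num_radius A"
    using num_radius_upper[OF u] by (simp add: mult_left_mono)
  finally show ?thesis by (simp add: mult.commute)
qed simp

lemma num_radius_msmult_le: "num_radius (msmult c A) \<le> cmod c * num_radius A"
proof (rule num_radius_least)
  fix x :: "complex^'a" assume "norm x = 1"
  then show "cmod (cinner x (msmult c A *v x)) \<le> cmod c * num_radius A"
    by (simp add: msmult_mv cinner_cscale_right norm_mult mult_left_mono num_radius_upper)
qed

section \<open>Spectral theorem for normal matrices\<close>

lemma exists_unit_orthogonal: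
  fixes S :: "(complex^'n::finite) set"
  assumes fin: "finite S" and card: "card S < CARD('n)"
  shows "\<exists>x. norm x = 1 \<and> (\<forall>v\<in>S. cinner v x = 0)"
proof -
  text \<open>\<open>cinner v x = 0\<close> is real orthogonality to both \<open>v\<close> and \<open>\<i> v\<close>, and
    \<open>complex^'n\<close> has real dimension \<open>2n\<close>.\<close>
  define T where "T = S \<union> cscale \<i> ` S"
  have "card T \<le> 2 * card S"
    unfolding T_def using card_Un_le[of S "cscale \<i> ` S"] card_image_le[OF fin, of "cscale \<i>"] by simp
  then have "dim T < DIM(complex^'n)"
    using dim_le_card'[of T] fin card by (simp add: T_def)
  then obtain x :: "complex^'n" where "x \<noteq> 0" and orth: "\<And>y. y \<in> span T \<Longrightarrow> orthogonal x y"
    using orthogonal_to_subspace_exists by blast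
  have orth_x: "cinner v x = 0" if v: "v \<in> S" for v
  proof -
    have "v \<in> span T" "cscale \<i> v \<in> span T" using v by (auto simp: T_def intro: span_base)
    then have "Re (cinner v x) = 0" "Re (cinner (cscale \<i> v) x) = 0"
      using orth by (metis orthogonal_def inner_commute Re_cinner)+
    then show ?thesis by (simp add: cinner_cscale_left complex_eq_iff)
  qed
  define u where "u = cscale (of_real (1 / norm x)) x"
  have "norm u = 1" using \<open>x \<noteq> 0\<close> by (simp add: u_def norm_cscale norm_divide)
  moreover have "\<forall>v\<in>S. cinner v u = 0" by (simp add: u_def cinner_cscale_right orth_x)
  ultimately show ?thesis by blast
qed

lemma orthonormal_extend:
  fixes P :: "complex^'n::finite \<Rightarrow> bool" and q0 :: "'n \<Rightarrow> complex^'n"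
  assumes step: "\<And>F. finite F \<Longrightarrow> card F < CARD('n) \<Longrightarrow> F \<subseteq> Collect P \<Longrightarrow>
                   \<exists>x. P x \<and> norm x = 1 \<and> (\<forall>v\<in>F. cinner v x = 0)"
    and q0: "orthonormal_on J q0" "\<forall>i\<in>J. P (q0 i)"
  shows "\<exists>q. orthonormal_on UNIV q \<and> (\<forall>i. P (q i)) \<and> (\<forall>i\<in>J. q i = q0 i)"
proof -
  have "\<exists>q. orthonormal_on (J \<union> K) q \<and> (\<forall>i\<in>J \<union> K. P (q i)) \<and> (\<forall>i\<in>J. q i = q0 i)"
    if "finite K" for K
    using that
  proof (induction K rule: finite_induct)
    case empty
    then show ?case using q0 by auto
  next
    case (insert k K)
    then obtain q where q: "orthonormal_on (J \<union> K) q" "\<forall>i\<in>J \<union> K. P (q i)" "\<forall>i\<in>J. q i = q0 i"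
      by blast
    show ?case
    proof (cases "k \<in> J")
      case True
      then have "J \<union> insert k K = J \<union> K" by auto
      then show ?thesis using q by auto
    next
      case False
      then have kK: "k \<notin> J \<union> K" using insert.hyps by auto
      then have "J \<union> K \<subset> UNIV" by auto
      then have "card (J \<union> K) < CARD('n)" by (simp add: psubset_card_mono)
      then have "card (q ` (J \<union> K)) < CARD('n)"
        using card_image_le[of "J \<union> K" q] by simp
      moreover have "q ` (J \<union> K) \<subseteq> Collect P" using q(2) by auto
      ultimately obtain x where x: "P x" "norm x = 1" "\<forall>v\<in>q ` (J \<union> K). cinner v x = 0"
        using step[of "q ` (J \<union> K)"] insert.hyps(1) by auto
      have "cinner (q i) x = 0" "cinner x (q i) = 0" if "i \<in> J \<union> K" for i
        using x(3) that by (auto simp: cinner_commute[of x])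
      moreover have "cinner x x = 1" using x(2) by (simp add: cinner_self)
      ultimately have "orthonormal_on (J \<union> insert k K) (q(k := x))"
        using kK q(1) unfolding orthonormal_on_def
        by (intro ballI, case_tac "i = k"; case_tac "j = k") auto
      then show ?thesis using q(2,3) x(1) kK by (auto intro!: exI[of _ "q(k := x)"])
    qed
  qed
  from this[of UNIV] show ?thesis by simp
qed

lemma orthonormal_basis_exists:
  fixes P :: "complex^'n::finite \<Rightarrow> bool"
  assumes "\<And>F. finite F \<Longrightarrow> card F < CARD('n) \<Longrightarrow> F \<subseteq> Collect P \<Longrightarrow>
             \<exists>x. P x \<and> norm x = 1 \<and> (\<forall>v\<in>F. cinner v x = 0)"
  shows "\<exists>q::'n \<Rightarrow> complex^'n. orthonormal_on UNIV q \<and> (\<forall>i. P (q i))"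
proof -
  have "orthonormal_on {} (\<lambda>_::'n. 0::complex^'n)" by (simp add: orthonormal_on_def)
  from orthonormal_extend[where P = P, OF assms this] show ?thesis by auto
qed

lemma linear_coeff_eq_0_if_quadratic_nonpos:
  fixes a b :: real
  assumes "\<And>t. t * a + t\<^sup>2 * b \<le> 0"
  shows "a = 0"
proof (rule ccontr)
  assume "a \<noteq> 0"
  define c where "c = \<bar>b\<bar> + 1"
  define t where "t = a / c"
  have "c > 0" by (simp add: c_def)
  have "0 < a\<^sup>2 / c\<^sup>2" using \<open>a \<noteq> 0\<close> \<open>c > 0\<close> by simp
  also have "\<dots> = t * a - t\<^sup>2 * (c - 1)"
    using \<open>c > 0\<close> by (simp add: t_def field_simps power2_eq_square)
  also have "\<dots> = t * a - t\<^sup>2 * \<bar>b\<bar>" by (simp add: c_def)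
  also have "\<dots> \<le> t * a + t\<^sup>2 * b"
    using mult_left_mono[OF abs_ge_minus_self[of b], of "t\<^sup>2"] by simp
  also have "\<dots> \<le> 0" by (rule assms)
  finally show False by simp
qed

lemma hermitian_inner_commute:
  assumes "madj H = H" shows "inner a (H *v b) = inner b (H *v a)"
proof -
  have "cinner a (H *v b) = cinner (H *v a) b" using cinner_madj_left[of H a b] assms by simp
  then show ?thesis by (metis Re_cinner inner_commute)
qed

lemma hermitian_rayleigh_max_eigenvector:
  fixes H :: "'n::finite cmat"
  assumes herm: "madj H = H" and sub: "subspace V" and inv: "\<And>z. z \<in> V \<Longrightarrow> H *v z \<in> V"
    and xV: "x \<in> V" and nx: "norm x = 1"
    and max: "\<And>z. z \<in> V \<Longrightarrow> inner z (H *v z) \<le> inner x (H *v x) * (norm z)\<^sup>2"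
  shows "H *v x = inner x (H *v x) *\<^sub>R x"
proof -
  define \<mu> where "\<mu> = inner x (H *v x)"
  define y where "y = H *v x - \<mu> *\<^sub>R x"
  have yV: "y \<in> V" unfolding y_def using sub inv xV by (simp add: subspace_diff subspace_scale)
  have "t * (2 * (norm y)\<^sup>2) + t\<^sup>2 * (inner y (H *v y) - \<mu> * (norm y)\<^sup>2) \<le> 0" for t
  proof -
    have "x + t *\<^sub>R y \<in> V" using sub xV yV by (simp add: subspace_add subspace_scale)
    then have "inner (x + t *\<^sub>R y) (H *v (x + t *\<^sub>R y)) \<le> \<mu> * (norm (x + t *\<^sub>R y))\<^sup>2"
      unfolding \<mu>_def by (rule max)
    moreover have "inner (x + t *\<^sub>R y) (H *v (x + t *\<^sub>R y))
        = \<mu> + 2 * t * inner y (H *v x) + t\<^sup>2 * inner y (H *v y)"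
      using hermitian_inner_commute[OF herm, of x y]
      by (simp add: \<mu>_def matrix_vector_right_distrib mv_scaleR inner_add_left inner_add_right
          power2_eq_square algebra_simps)
    moreover have "(norm (x + t *\<^sub>R y))\<^sup>2 = 1 + 2 * t * inner x y + t\<^sup>2 * (norm y)\<^sup>2"
      using nx unfolding power2_norm_eq_inner
      by (simp add: inner_add_left inner_add_right inner_commute[of y x] norm_eq_1
          power2_eq_square algebra_simps)
    moreover have "inner y (H *v x) = (norm y)\<^sup>2 + \<mu> * inner x y"
      by (simp add: y_def power2_norm_eq_inner inner_diff_right inner_commute algebra_simps)
    ultimately show ?thesis by (simp add: algebra_simps)
  qed
  then have "2 * (norm y)\<^sup>2 = 0" by (rule linear_coeff_eq_0_if_quadratic_nonpos)
  then show ?thesis by (simp add: y_def \<mu>_def)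
qed

lemma hermitian_eigenvector_in_subspace:
  fixes H :: "'n::finite cmat"
  assumes herm: "madj H = H" and sub: "subspace V" and inv: "\<And>z. z \<in> V \<Longrightarrow> H *v z \<in> V"
    and ne: "\<exists>x\<in>V. x \<noteq> 0"
  shows "\<exists>x\<in>V. norm x = 1 \<and> (\<exists>\<mu>::real. H *v x = \<mu> *\<^sub>R x)"
proof -
  define K where "K = V \<inter> sphere 0 1"
  define f where "f z = inner z (H *v z)" for z
  have unit: "(1 / norm z) *\<^sub>R z \<in> K" if "z \<in> V" "z \<noteq> 0" for z
    using that sub by (simp add: K_def subspace_scale)
  have "compact K"
    unfolding K_def using closed_subspace[OF sub]
    by (simp add: compact_eq_bounded_closed closed_Int bounded_Int)
  moreover have "K \<noteq> {}" using ne unit by blast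
  moreover have "continuous_on K f"
    unfolding f_def by (intro continuous_intros linear_continuous_on) (simp add: linear_linear)
  ultimately obtain x where xK: "x \<in> K" and xmax: "\<And>y. y \<in> K \<Longrightarrow> f y \<le> f x"
    using continuous_attains_sup by metis
  have "f z \<le> f x * (norm z)\<^sup>2" if "z \<in> V" for z
  proof (cases "z = 0")
    case False
    have "f ((1 / norm z) *\<^sub>R z) \<le> f x" using xmax unit[OF that False] .
    then show ?thesis
      using False by (simp add: f_def mv_scaleR power2_eq_square field_simps)
  qed (simp add: f_def)
  then have "H *v x = f x *\<^sub>R x"
    using hermitian_rayleigh_max_eigenvector[OF herm sub inv] xK unfolding f_def K_def by auto
  then show ?thesis using xK by (auto simp: K_def)
qed

text \<open>Since \<open>subspace\<close> means a real subspace, invariance under multiplication by \<open>\<i>\<close> is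
  assumed explicitly.\<close>

lemma normal_common_eigenvector_in_subspace:
  fixes Z :: "'n::finite cmat"
  assumes normal: "Z ** madj Z = madj Z ** Z" and sub: "subspace V"
    and inv: "\<And>x. x \<in> V \<Longrightarrow> Z *v x \<in> V" "\<And>x. x \<in> V \<Longrightarrow> madj Z *v x \<in> V"
      "\<And>x. x \<in> V \<Longrightarrow> cscale \<i> x \<in> V"
    and ne: "\<exists>x\<in>V. x \<noteq> 0"
  shows "\<exists>x\<in>V. norm x = 1 \<and> common_eigenvector Z x"
proof -
  text \<open>Find an eigenvector of the Hermitian matrix \<open>H\<^sub>1 = Z + Z\<^sup>*\<close>, then one of the Hermitian
    matrix \<open>H\<^sub>2 = \<i>(Z - Z\<^sup>*)\<close> inside that eigenspace of \<open>H\<^sub>1\<close>, which is invariant because \<open>Z\<close>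
    commutes with \<open>H\<^sub>1\<close>.\<close>
  define H1 where "H1 = Z + madj Z"
  define H2 where "H2 = msmult \<i> (Z - madj Z)"
  have H1v: "H1 *v x = Z *v x + madj Z *v x" for x
    by (simp add: H1_def matrix_vector_mult_add_rdistrib)
  have H2v: "H2 *v x = cscale \<i> (Z *v x - madj Z *v x)" for x
    by (simp add: H2_def msmult_mv matrix_vector_mult_diff_rdistrib)
  obtain x1 lam where "x1 \<in> V" "norm x1 = 1" "H1 *v x1 = lam *\<^sub>R x1"
    using hermitian_eigenvector_in_subspace[of H1 V] sub inv ne
    by (auto simp: H1_def madj_add add.commute matrix_vector_mult_add_rdistrib subspace_add)
  define E where "E = {x \<in> V. H1 *v x = lam *\<^sub>R x}"
  have subE: "subspace E"
    unfolding E_def using sub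
    by (intro subspaceI) (auto simp: subspace_0 subspace_add subspace_scale
        matrix_vector_right_distrib mv_scaleR scaleR_add_right)
  have "H1 ** Z = Z ** H1" "H1 ** madj Z = madj Z ** H1"
    unfolding H1_def by (simp_all add: mmult_add_right matrix_add_ldistrib normal)
  then have "H1 *v (Z *v x) = Z *v (H1 *v x)" "H1 *v (madj Z *v x) = madj Z *v (H1 *v x)" for x
    by (simp_all add: matrix_vector_mul_assoc)
  then have invE: "Z *v x \<in> E" "madj Z *v x \<in> E" "cscale \<i> x \<in> E" if "x \<in> E" for x
    using that inv
    by (auto simp: E_def mv_scaleR mv_cscale scaleR_eq_cscale cscale_cscale mult.commute)
  have "madj H2 = H2" by (simp add: H2_def vec_eq_iff algebra_simps)
  moreover have "\<And>x. x \<in> E \<Longrightarrow> H2 *v x \<in> E"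
    using invE subE by (simp add: H2v subspace_diff)
  moreover have "\<exists>x\<in>E. x \<noteq> 0" using \<open>x1 \<in> V\<close> \<open>norm x1 = 1\<close> \<open>H1 *v x1 = lam *\<^sub>R x1\<close>
    by (auto simp: E_def)
  ultimately obtain x \<mu> where x: "x \<in> E" "norm x = 1" "H2 *v x = \<mu> *\<^sub>R x"
    using hermitian_eigenvector_in_subspace[OF _ subE] by blast
  have e1: "H1 *v x = lam *\<^sub>R x" using x(1) by (simp add: E_def)
  define \<alpha> where "\<alpha> = (complex_of_real lam - \<i> * complex_of_real \<mu>) / 2"
  have "(Z *v x) $ k = \<alpha> * x $ k \<and> (madj Z *v x) $ k = cnj \<alpha> * x $ k" for k
  proof -
    have "(Z *v x) $ k + (madj Z *v x) $ k = of_real lam * x $ k"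
      using arg_cong[OF e1, of "\<lambda>v. v $ k"] by (simp add: H1v) (simp add: scaleR_conv_of_real)
    moreover have "\<i> * ((Z *v x) $ k - (madj Z *v x) $ k) = of_real \<mu> * x $ k"
      using arg_cong[OF x(3), of "\<lambda>v. v $ k"] by (simp add: H2v) (simp add: scaleR_conv_of_real)
    ultimately show ?thesis
      unfolding \<alpha>_def by (simp add: field_simps complex_eq_iff)
  qed
  then have "common_eigenvector Z x" by (auto simp: common_eigenvector_def vec_eq_iff)
  then show ?thesis using x(1,2) by (auto simp: E_def)
qed

lemma normal_common_eigenvector_orthogonal:
  fixes Z :: "'n::finite cmat" and F :: "(complex^'n) set"
  assumes normal: "Z ** madj Z = madj Z ** Z"
    and fin: "finite F" and card: "card F < CARD('n)"
    and F: "\<And>v. v \<in> F \<Longrightarrow> common_eigenvector Z v"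
  shows "\<exists>x. common_eigenvector Z x \<and> norm x = 1 \<and> (\<forall>v\<in>F. cinner v x = 0)"
proof -
  define V where "V = {x. \<forall>v\<in>F. cinner v x = 0}"
  have "subspace V" unfolding V_def
    by (intro subspaceI) (auto simp: cinner_add_right cinner_scaleR_right)
  moreover have "Z *v x \<in> V" if "x \<in> V" for x
  proof -
    have "cinner v (Z *v x) = 0" if "v \<in> F" for v
    proof -
      obtain \<alpha> where "madj Z *v v = cscale (cnj \<alpha>) v"
        using F[OF \<open>v \<in> F\<close>] unfolding common_eigenvector_def by blast
      then show ?thesis using \<open>x \<in> V\<close> \<open>v \<in> F\<close>
        by (simp add: cinner_madj_left[symmetric] cinner_cscale_left V_def)
    qed
    then show ?thesis by (simp add: V_def)
  qed
  moreover have "madj Z *v x \<in> V" if "x \<in> V" for x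
  proof -
    have "cinner v (madj Z *v x) = 0" if "v \<in> F" for v
    proof -
      obtain \<alpha> where "Z *v v = cscale \<alpha> v"
        using F[OF \<open>v \<in> F\<close>] unfolding common_eigenvector_def by blast
      then show ?thesis using \<open>x \<in> V\<close> \<open>v \<in> F\<close>
        by (simp add: cinner_madj_right cinner_cscale_left V_def)
    qed
    then show ?thesis by (simp add: V_def)
  qed
  moreover have "cscale \<i> x \<in> V" if "x \<in> V" for x
    using that by (simp add: V_def cinner_cscale_right)
  moreover have "\<exists>x\<in>V. x \<noteq> 0"
    using exists_unit_orthogonal[OF fin card] by (auto simp: V_def)
  ultimately obtain x where "x \<in> V" "norm x = 1" "common_eigenvector Z x"
    using normal_common_eigenvector_in_subspace[OF normal, of V] by blast
  then show ?thesis by (auto simp: V_def)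
qed

theorem normal_orthonormal_eigenbasis:
  fixes Z :: "'n::finite cmat"
  assumes normal: "Z ** madj Z = madj Z ** Z"
  obtains q :: "'n \<Rightarrow> complex^'n" and \<alpha>
  where "orthonormal_on UNIV q" and "\<And>k. Z *v q k = cscale (\<alpha> k) (q k)"
proof -
  obtain q :: "'n \<Rightarrow> complex^'n" where "orthonormal_on UNIV q" "\<forall>i. common_eigenvector Z (q i)"
    using orthonormal_basis_exists[of "common_eigenvector Z"]
      normal_common_eigenvector_orthogonal[OF normal] by blast
  moreover from this(2) obtain \<alpha> where "\<forall>k. Z *v q k = cscale (\<alpha> k) (q k)"
    unfolding common_eigenvector_def by metis
  ultimately show ?thesis using that by blast
qed

lemma orthonormal_on_UNIV_norm: "orthonormal_on UNIV q \<Longrightarrow> norm (q k) = 1"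
  by (simp add: orthonormal_on_def norm_eq_1_if_cinner_self)

lemma sum_outer_prod_orthonormal:
  fixes q :: "'n::finite \<Rightarrow> complex^'n"
  assumes "orthonormal_on UNIV q"
  shows "(\<Sum>k\<in>UNIV. outer_prod (q k) (q k)) = mat 1"
proof -
  define Q :: "'n cmat" where "Q = (\<chi> r k. q k $ r)"
  have "madj Q ** Q = mat 1"
    using assms unfolding orthonormal_on_def
    by (simp add: vec_eq_iff matrix_matrix_mult_def Q_def mat_def cinner_def)
  then have "Q ** madj Q = mat 1" using matrix_left_right_inverse by blast
  then show ?thesis
    by (simp add: vec_eq_iff matrix_matrix_mult_def Q_def sum_component)
qed

lemma mtrace_eq_sum_orthonormal:
  fixes q :: "'n::finite \<Rightarrow> complex^'n"
  assumes "orthonormal_on UNIV q"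
  shows "mtrace B = (\<Sum>k\<in>UNIV. cinner (q k) (B *v q k))"
proof -
  have "mtrace B = mtrace (B ** (\<Sum>k\<in>UNIV. outer_prod (q k) (q k)))"
    by (simp add: sum_outer_prod_orthonormal[OF assms])
  also have "\<dots> = (\<Sum>k\<in>UNIV. cinner (q k) (B *v q k))"
    by (simp add: mmult_sum mtrace_sum mtrace_mult_outer_prod)
  finally show ?thesis .
qed

lemma unitary_mult_madj: "unitary U \<Longrightarrow> U ** madj U = mat 1"
  unfolding unitary_def using matrix_left_right_inverse by blast

lemma cinner_unitary: "unitary U \<Longrightarrow> cinner (U *v x) (U *v y) = cinner x y"
  unfolding unitary_def by (simp add: cinner_madj_right[symmetric] matrix_vector_mul_assoc)

lemma norm_unitary_mv: "unitary U \<Longrightarrow> norm (U *v x) = norm x"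
  by (rule norm_eq_if_cinner_self_eq) (simp add: cinner_unitary)

lemma unitary_map_orthonormal_bases:
  fixes q w :: "'n::finite \<Rightarrow> complex^'n"
  assumes w: "orthonormal_on UNIV w" and q: "orthonormal_on UNIV q"
  obtains U where "unitary U" and "\<And>k. U *v w k = q k"
proof
  define U where "U = (\<Sum>k\<in>UNIV. outer_prod (q k) (w k))"
  have "madj U ** U = (\<Sum>k\<in>UNIV. \<Sum>j\<in>UNIV. msmult (cinner (q k) (q j)) (outer_prod (w k) (w j)))"
    by (simp add: U_def madj_sum madj_outer_prod sum_mmult mmult_sum outer_prod_mult)
      (rule sum.swap)
  also have "\<dots> = (\<Sum>k\<in>UNIV. outer_prod (w k) (w k))"
    using q by (simp add: orthonormal_on_def if_distrib[of "\<lambda>c. msmult c _"] cong: if_cong)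
  also have "\<dots> = mat 1" by (rule sum_outer_prod_orthonormal[OF w])
  finally show "unitary U" by (simp add: unitary_def)
  show "U *v w j = q j" for j
    using w by (simp add: U_def sum_mv outer_prod_mv orthonormal_on_def if_distrib[of "\<lambda>c. cscale c _"]
        cong: if_cong)
qed

lemma cmod_mtrace_mult_unitary_le:
  fixes X U :: "'n::finite cmat"
  assumes "unitary U"
  shows "cmod (mtrace (X ** U)) \<le> real CARD('n) * num_radius X"
proof -
  have "U ** madj U = madj U ** U"
    using assms unitary_mult_madj by (simp add: unitary_def)
  then obtain r :: "'n \<Rightarrow> complex^'n" and \<delta> where r: "orthonormal_on UNIV r" and ev: "\<And>k. U *v r k = cscale (\<delta> k) (r k)"
    using normal_orthonormal_eigenbasis by blast
  have unimodular: "cmod (\<delta> k) = 1" for k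
    using norm_unitary_mv[OF assms, of "r k"] orthonormal_on_UNIV_norm[OF r, of k]
    by (simp add: ev norm_cscale)
  have "mtrace (X ** U) = (\<Sum>k\<in>UNIV. \<delta> k * cinner (r k) (X *v r k))"
    by (simp add: mtrace_eq_sum_orthonormal[OF r] ev mv_cscale cinner_cscale_right
        flip: matrix_vector_mul_assoc)
  then have "cmod (mtrace (X ** U)) \<le> (\<Sum>k\<in>UNIV. cmod (\<delta> k * cinner (r k) (X *v r k)))"
    by (simp add: norm_sum)
  also have "\<dots> \<le> (\<Sum>k\<in>(UNIV::'n set). num_radius X)"
    by (rule sum_mono) (simp add: norm_mult unimodular num_radius_upper orthonormal_on_UNIV_norm[OF r])
  finally show ?thesis by simp
qed

section \<open>The trace duality bound\<close>

lemma singular_orthonormal_bases: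
  fixes X :: "'n::finite cmat"
  obtains q w :: "'n \<Rightarrow> complex^'n"
  where "orthonormal_on UNIV q" and "orthonormal_on UNIV w"
    and "\<And>k. X *v q k = cscale (of_real (norm (X *v q k))) (w k)"
proof -
  have "(madj X ** X) ** madj (madj X ** X) = madj (madj X ** X) ** (madj X ** X)"
    by (simp add: madj_mult)
  then obtain q :: "'n \<Rightarrow> complex^'n" and eigval where q: "orthonormal_on UNIV q"
    and ev: "\<And>k. (madj X ** X) *v q k = cscale (eigval k) (q k)"
    using normal_orthonormal_eigenbasis by blast
  have orth: "cinner (X *v q j) (X *v q k) = 0" if "j \<noteq> k" for j k
  proof -
    have "cinner (X *v q j) (X *v q k) = cinner (q j) ((madj X ** X) *v q k)"
      by (simp add: cinner_madj_right flip: matrix_vector_mul_assoc)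
    then show ?thesis using ev q that by (simp add: cinner_cscale_right orthonormal_on_def)
  qed
  define J where "J = {k. X *v q k \<noteq> 0}"
  define w0 where "w0 k = cscale (of_real (1 / norm (X *v q k))) (X *v q k)" for k
  have "orthonormal_on J w0"
    unfolding orthonormal_on_def
  proof (intro ballI)
    fix i j assume "i \<in> J" "j \<in> J"
    then show "cinner (w0 i) (w0 j) = (if i = j then 1 else 0)"
      by (cases "i = j")
        (simp_all add: w0_def J_def cinner_cscale_left cinner_cscale_right cinner_self orth
          norm_cscale norm_divide)
  qed
  then obtain w where w: "orthonormal_on UNIV w" and wJ: "\<And>k. k \<in> J \<Longrightarrow> w k = w0 k"
    using orthonormal_extend[where P = "\<lambda>_. True", of J w0] exists_unit_orthogonal by fastforce
  have "X *v q k = cscale (of_real (norm (X *v q k))) (w k)" for k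
    by (cases "k \<in> J") (simp_all add: J_def wJ w0_def cscale_cscale flip: of_real_mult)
  then show ?thesis using that q w by blast
qed

lemma cmod_mtrace_le_op_norm_sum:
  fixes A X :: "'n::finite cmat" and q :: "'n \<Rightarrow> complex^'n"
  assumes q: "orthonormal_on UNIV q"
  shows "cmod (mtrace (madj A ** X)) \<le> op_norm A * (\<Sum>k\<in>UNIV. norm (X *v q k))"
proof -
  have "cmod (mtrace (madj A ** X)) = cmod (\<Sum>k\<in>UNIV. cinner (A *v q k) (X *v q k))"
    by (simp add: mtrace_eq_sum_orthonormal[OF q] cinner_madj_right flip: matrix_vector_mul_assoc)
  also have "\<dots> \<le> (\<Sum>k\<in>UNIV. norm (A *v q k) * norm (X *v q k))"
    by (rule order_trans[OF norm_sum sum_mono]) (rule cmod_cinner_le)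
  also have "\<dots> \<le> (\<Sum>k\<in>UNIV. op_norm A * norm (X *v q k))"
  proof (intro sum_mono mult_right_mono)
    show "norm (A *v q k) \<le> op_norm A" for k
      using norm_mv_le_op_norm[of A "q k"] by (simp add: orthonormal_on_UNIV_norm[OF q])
  qed simp
  finally show ?thesis by (simp add: sum_distrib_left)
qed

theorem cmod_mtrace_le_op_norm_num_radius:
  fixes A X :: "'n::finite cmat"
  shows "cmod (mtrace (madj A ** X)) \<le> real CARD('n) * op_norm A * num_radius X"
proof -
  obtain q w :: "'n \<Rightarrow> complex^'n" where q: "orthonormal_on UNIV q" and w: "orthonormal_on UNIV w"
    and Xq: "\<And>k. X *v q k = cscale (of_real (norm (X *v q k))) (w k)"
    using singular_orthonormal_bases[of X] by blast
  obtain U where U: "unitary U" and Uw: "\<And>k. U *v w k = q k"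
    using unitary_map_orthonormal_bases[OF w q] by blast
  text \<open>The trace norm \<open>\<Sum>\<^sub>k \<sigma>\<^sub>k\<close> equals \<open>Tr(XU)\<close>.\<close>
  have "cinner (w k) (X *v q k) = of_real (norm (X *v q k))" for k
    using arg_cong[OF Xq[of k], of "cinner (w k)"] w
    by (simp add: cinner_cscale_right orthonormal_on_def)
  then have "mtrace (X ** U) = of_real (\<Sum>k\<in>UNIV. norm (X *v q k))"
    by (simp add: mtrace_eq_sum_orthonormal[OF w] Uw flip: matrix_vector_mul_assoc)
  then have "cmod (mtrace (X ** U)) = \<bar>\<Sum>k\<in>UNIV. norm (X *v q k)\<bar>"
    by (simp only: norm_of_real)
  then have "(\<Sum>k\<in>UNIV. norm (X *v q k)) \<le> cmod (mtrace (X ** U))" by simp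
  also have "\<dots> \<le> real CARD('n) * num_radius X" by (rule cmod_mtrace_mult_unitary_le[OF U])
  finally have "(\<Sum>k\<in>UNIV. norm (X *v q k)) \<le> real CARD('n) * num_radius X" .
  then have "op_norm A * (\<Sum>k\<in>UNIV. norm (X *v q k)) \<le> op_norm A * (real CARD('n) * num_radius X)"
    by (rule mult_left_mono[OF _ op_norm_nonneg])
  with cmod_mtrace_le_op_norm_sum[OF q, of A X] show ?thesis by (simp add: ac_simps)
qed

section \<open>The dual norm of the numerical radius\<close>

lemma cmod_mtrace_le_op_norm_if_num_radius_le_1:
  fixes X Y :: "'n::finite cmat"
  assumes "num_radius X \<le> 1"
  shows "cmod (mtrace (madj Y ** X)) \<le> real CARD('n) * op_norm Y"
proof -
  have "real CARD('n) * op_norm Y * num_radius X \<le> real CARD('n) * op_norm Y"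
    using assms by (simp add: mult_left_le op_norm_nonneg)
  with cmod_mtrace_le_op_norm_num_radius[of Y X] show ?thesis by linarith
qed

lemma dual_num_radius_set_bdd:
  fixes Y :: "'n::finite cmat"
  shows "bdd_above {cmod (mtrace (madj Y ** X)) | X. num_radius X \<le> 1}"
  by (rule bdd_aboveI[of _ "real CARD('n) * op_norm Y"])
    (auto intro: cmod_mtrace_le_op_norm_if_num_radius_le_1)

lemma dual_num_radius_upper:
  "num_radius X \<le> 1 \<Longrightarrow> cmod (mtrace (madj Y ** X)) \<le> dual_num_radius Y"
  unfolding dual_num_radius_def by (rule cSup_upper[OF _ dual_num_radius_set_bdd]) auto

lemma dual_num_radius_least:
  fixes Y :: "'n::finite cmat"
  assumes "\<And>X. num_radius X \<le> 1 \<Longrightarrow> cmod (mtrace (madj Y ** X)) \<le> c"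
  shows "dual_num_radius Y \<le> c"
proof -
  have "num_radius (0::'n cmat) \<le> 1" by (simp add: num_radius_zero)
  then have "{cmod (mtrace (madj Y ** X)) | X. num_radius X \<le> 1} \<noteq> {}" by blast
  then show ?thesis unfolding dual_num_radius_def using assms by (auto intro: cSup_least)
qed

lemma dual_num_radius_nonneg: "0 \<le> dual_num_radius (Y::'n::finite cmat)"
  using dual_num_radius_upper[of "0::'n cmat" Y] by (simp add: num_radius_zero)

lemma dual_num_radius_le_op_norm:
  fixes Y :: "'n::finite cmat"
  shows "dual_num_radius Y \<le> real CARD('n) * op_norm Y"
  by (rule dual_num_radius_least) (rule cmod_mtrace_le_op_norm_if_num_radius_le_1)

lemma dual_num_radius_msmult_le:
  "dual_num_radius (msmult c Y) \<le> cmod c * dual_num_radius Y"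
proof (rule dual_num_radius_least)
  fix X :: "'a cmat" assume "num_radius X \<le> 1"
  then show "cmod (mtrace (madj (msmult c Y) ** X)) \<le> cmod c * dual_num_radius Y"
    by (simp add: madj_msmult msmult_mult_left mtrace_msmult norm_mult mult_left_mono
        dual_num_radius_upper)
qed

lemma dual_num_radius_msmult: "dual_num_radius (msmult c Y) = cmod c * dual_num_radius Y"
proof (cases "c = 0")
  case True
  then show ?thesis
    using dual_num_radius_msmult_le[of 0 Y] dual_num_radius_nonneg[of "msmult 0 Y"] by simp
next
  case False
  have "dual_num_radius Y = dual_num_radius (msmult (1 / c) (msmult c Y))"
    using False by (simp add: msmult_msmult)
  also have "\<dots> \<le> cmod (1 / c) * dual_num_radius (msmult c Y)"
    by (rule dual_num_radius_msmult_le)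
  finally have "cmod c * dual_num_radius Y \<le> dual_num_radius (msmult c Y)"
    using False by (simp add: norm_divide field_simps)
  with dual_num_radius_msmult_le[of c Y] show ?thesis by simp
qed

lemma dual_num_radius_triangle:
  "dual_num_radius (A + B) \<le> dual_num_radius A + dual_num_radius (B::'n::finite cmat)"
proof (rule dual_num_radius_least)
  fix X :: "'n cmat" assume X: "num_radius X \<le> 1"
  have "cmod (mtrace (madj (A + B) ** X))
      \<le> cmod (mtrace (madj A ** X)) + cmod (mtrace (madj B ** X))"
    by (simp add: madj_add mmult_add_right mtrace_add norm_triangle_ineq)
  also have "\<dots> \<le> dual_num_radius A + dual_num_radius B"
    by (intro add_mono dual_num_radius_upper[OF X])
  finally show "cmod (mtrace (madj (A + B) ** X)) \<le> dual_num_radius A + dual_num_radius B" .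
qed

lemma dual_num_radius_eq_0_iff: "dual_num_radius Y = 0 \<longleftrightarrow> Y = 0"
proof
  assume "dual_num_radius Y = 0"
  text \<open>Test against \<open>Y\<close> itself, scaled into the numerical-radius unit ball.\<close>
  define c where "c = max 1 (num_radius Y)"
  have "c > 0" by (simp add: c_def)
  have "num_radius (msmult (of_real (1 / c)) Y) \<le> num_radius Y / c"
    using num_radius_msmult_le[of "of_real (1 / c)" Y] \<open>c > 0\<close> by (simp add: norm_divide)
  also have "\<dots> \<le> 1" using \<open>c > 0\<close> by (simp add: c_def divide_le_eq)
  finally have "cmod (mtrace (madj Y ** msmult (of_real (1 / c)) Y)) \<le> 0"
    using dual_num_radius_upper \<open>dual_num_radius Y = 0\<close> by metis
  then have "of_real (1 / c) * of_real ((norm Y)\<^sup>2) = (0::complex)"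
    by (simp add: msmult_mult_right mtrace_msmult mtrace_madj_mult_self)
  then show "Y = 0" using \<open>c > 0\<close> by simp
next
  assume "Y = 0"
  then show "dual_num_radius Y = 0"
    using dual_num_radius_msmult[of 0 Y] by simp
qed

lemma is_matrix_norm_dual_num_radius: "is_matrix_norm dual_num_radius"
  unfolding is_matrix_norm_def
  by (simp add: dual_num_radius_nonneg dual_num_radius_eq_0_iff dual_num_radius_msmult
      dual_num_radius_triangle)

lemma sum_Sup_le:
  fixes S :: "nat \<Rightarrow> real set"
  assumes "\<And>i. i < k \<Longrightarrow> S i \<noteq> {}" and "\<And>i. i < k \<Longrightarrow> bdd_above (S i)"
    and "\<And>y. (\<And>i. i < k \<Longrightarrow> y i \<in> S i) \<Longrightarrow> (\<Sum>i<k. y i) \<le> b"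
  shows "(\<Sum>i<k. Sup (S i)) \<le> b"
  using assms
proof (induction k arbitrary: b)
  case 0
  then show ?case by auto
next
  case (Suc k)
  have "Sup (S k) \<le> b - (\<Sum>i<k. Sup (S i))"
  proof (rule cSup_least)
    show "S k \<noteq> {}" using Suc.prems(1) by simp
    fix z assume z: "z \<in> S k"
    have "(\<Sum>i<k. Sup (S i)) \<le> b - z"
    proof (rule Suc.IH)
      fix y assume y: "\<And>i. i < k \<Longrightarrow> y i \<in> S i"
      have "(\<Sum>i<Suc k. (y(k := z)) i) \<le> b"
        by (rule Suc.prems(3)) (use y z in \<open>auto simp: less_Suc_eq\<close>)
      moreover have "(\<Sum>i<k. (y(k := z)) i) = (\<Sum>i<k. y i)" by (rule sum.cong) auto
      ultimately show "(\<Sum>i<k. y i) \<le> b - z" by simp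
    qed (use Suc.prems in auto)
    then show "z \<le> b - (\<Sum>i<k. Sup (S i))" by simp
  qed
  then show ?case by simp
qed

lemma mtrace_madj_congruence:
  "mtrace (madj (C ** X ** madj C) ** Y) = mtrace (madj X ** (madj C ** Y ** C))"
proof -
  have "mtrace (madj (C ** X ** madj C) ** Y) = mtrace (C ** (madj X ** madj C ** Y))"
    by (simp add: madj_mult matrix_mul_assoc)
  also have "\<dots> = mtrace (madj X ** (madj C ** Y ** C))"
    by (subst mtrace_mult_commute) (simp add: matrix_mul_assoc)
  finally show ?thesis .
qed

lemma num_radius_congruence_sum_le:
  fixes C Y :: "nat \<Rightarrow> 'n::finite cmat"
  assumes sumC: "(\<Sum>i<k. madj (C i) ** C i) = mat 1"
    and Y: "\<And>i. i < k \<Longrightarrow> num_radius (Y i) \<le> 1"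
  shows "num_radius (\<Sum>i<k. madj (C i) ** Y i ** C i) \<le> 1"
proof (rule num_radius_least)
  fix x :: "complex^'n" assume x: "norm x = 1"
  have "cmod (cinner x ((\<Sum>i<k. madj (C i) ** Y i ** C i) *v x))
      = cmod (\<Sum>i<k. cinner (C i *v x) (Y i *v (C i *v x)))"
    by (simp add: sum_mv cinner_sum_right cinner_madj_right flip: matrix_vector_mul_assoc)
  also have "\<dots> \<le> (\<Sum>i<k. num_radius (Y i) * (norm (C i *v x))\<^sup>2)"
    by (rule order_trans[OF norm_sum sum_mono]) (rule cmod_cinner_mv_le_num_radius)
  also have "\<dots> \<le> (\<Sum>i<k. (norm (C i *v x))\<^sup>2)"
    using Y num_radius_nonneg by (intro sum_mono mult_left_le_one_le) auto
  also have "\<dots> = 1"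
  proof -
    have "of_real (\<Sum>i<k. (norm (C i *v x))\<^sup>2) = (\<Sum>i<k. cinner (C i *v x) (C i *v x))"
      by (simp add: cinner_self)
    also have "\<dots> = cinner x ((\<Sum>i<k. madj (C i) ** C i) *v x)"
      by (simp add: sum_mv cinner_sum_right cinner_madj_right flip: matrix_vector_mul_assoc)
    also have "\<dots> = 1" using x by (simp add: sumC cinner_self)
    finally show ?thesis by (metis of_real_eq_1_iff)
  qed
  finally show "cmod (cinner x ((\<Sum>i<k. madj (C i) ** Y i ** C i) *v x)) \<le> 1" .
qed

lemma sum_cmod_mtrace_congruence_le:
  fixes C Y :: "nat \<Rightarrow> 'n::finite cmat"
  assumes sumC: "(\<Sum>i<k. madj (C i) ** C i) = mat 1"
    and Y: "\<And>i. i < k \<Longrightarrow> num_radius (Y i) \<le> 1"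
  shows "(\<Sum>i<k. cmod (mtrace (madj (C i ** X ** madj (C i)) ** Y i))) \<le> dual_num_radius X"
proof -
  define t where "t i = mtrace (madj (C i ** X ** madj (C i)) ** Y i)" for i
  text \<open>Rotating each \<open>Y\<^sub>i\<close> by the phase of \<open>t\<^sub>i\<close> turns the sum of moduli into one trace.\<close>
  define Y' where "Y' i = msmult (cnj (sgn (t i))) (Y i)" for i
  have "num_radius (Y' i) \<le> 1" if "i < k" for i
  proof -
    have "num_radius (Y' i) \<le> cmod (sgn (t i)) * num_radius (Y i)"
      using num_radius_msmult_le[of "cnj (sgn (t i))" "Y i"] by (simp add: Y'_def)
    also have "\<dots> \<le> 1 * 1"
      using Y[OF that] by (intro mult_mono) (auto simp: norm_sgn num_radius_nonneg)
    finally show ?thesis by simp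
  qed
  then have "num_radius (\<Sum>i<k. madj (C i) ** Y' i ** C i) \<le> 1"
    by (rule num_radius_congruence_sum_le[OF sumC])
  then have "cmod (mtrace (madj X ** (\<Sum>i<k. madj (C i) ** Y' i ** C i))) \<le> dual_num_radius X"
    by (rule dual_num_radius_upper)
  moreover have "mtrace (madj X ** (\<Sum>i<k. madj (C i) ** Y' i ** C i)) = of_real (\<Sum>i<k. cmod (t i))"
    by (simp add: Y'_def t_def mtrace_madj_congruence mmult_sum mtrace_sum msmult_mult_left
        msmult_mult_right mtrace_msmult cnj_sgn_mult_self)
  then have "cmod (mtrace (madj X ** (\<Sum>i<k. madj (C i) ** Y' i ** C i))) = (\<Sum>i<k. cmod (t i))"
    by (simp only: norm_of_real abs_of_nonneg[OF sum_nonneg[OF norm_ge_zero]])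
  ultimately have "(\<Sum>i<k. cmod (t i)) \<le> dual_num_radius X" by simp
  then show ?thesis by (simp only: t_def)
qed

theorem dual_num_radius_congruence_sum_le:
  fixes C :: "nat \<Rightarrow> 'n::finite cmat"
  assumes sumC: "(\<Sum>i<k. madj (C i) ** C i) = mat 1"
  shows "(\<Sum>i<k. dual_num_radius (C i ** X ** madj (C i))) \<le> dual_num_radius X"
proof -
  define S where "S i = {cmod (mtrace (madj (C i ** X ** madj (C i)) ** Y)) | Y. num_radius Y \<le> 1}"
    for i
  have "(\<Sum>i<k. Sup (S i)) \<le> dual_num_radius X"
  proof (rule sum_Sup_le)
    have "num_radius (0::'n cmat) \<le> 1" by (simp add: num_radius_zero)
    then show "S i \<noteq> {}" for i unfolding S_def by blast
    show "bdd_above (S i)" for i unfolding S_def by (rule dual_num_radius_set_bdd)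
    fix y assume y: "\<And>i. i < k \<Longrightarrow> y i \<in> S i"
    define P where "P i Yi \<longleftrightarrow> num_radius Yi \<le> 1 \<and>
        y i = cmod (mtrace (madj (C i ** X ** madj (C i)) ** Yi))" for i Yi
    define Y where "Y i = (SOME Yi. P i Yi)" for i
    have Y: "P i (Y i)" if "i < k" for i
    proof -
      have "\<exists>Yi. P i Yi" using y[OF that] unfolding S_def P_def by blast
      then show ?thesis unfolding Y_def by (rule someI_ex)
    qed
    then have "(\<Sum>i<k. y i) = (\<Sum>i<k. cmod (mtrace (madj (C i ** X ** madj (C i)) ** Y i)))"
      by (intro sum.cong) (auto simp: P_def)
    also have "\<dots> \<le> dual_num_radius X"
      using Y by (intro sum_cmod_mtrace_congruence_le[OF sumC]) (auto simp: P_def)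
    finally show "(\<Sum>i<k. y i) \<le> dual_num_radius X" .
  qed
  then show ?thesis by (simp add: S_def dual_num_radius_def)
qed

lemma is_matrix_normD:
  assumes "is_matrix_norm M"
  shows "0 \<le> M A" and "M A = 0 \<longleftrightarrow> A = 0" and "M (msmult c A) = cmod c * M A"
    and "M (A + B) \<le> M A + M B"
  using assms unfolding is_matrix_norm_def by blast+

lemma is_L_normD:
  fixes M :: "'n::finite cmat \<Rightarrow> real" and C :: "nat \<Rightarrow> 'n cmat"
  shows "is_L_norm M \<Longrightarrow> (\<Sum>i<k. madj (C i) ** C i) = mat 1 \<Longrightarrow>
    (\<Sum>i<k. M (C i ** X ** madj (C i))) \<le> M X"
  unfolding is_L_norm_def by blast

lemma is_L_norm_dual_num_radius: "is_L_norm dual_num_radius"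
  unfolding is_L_norm_def
  by (simp add: is_matrix_norm_dual_num_radius dual_num_radius_congruence_sum_le)

lemma is_L_norm_divide:
  assumes L: "is_L_norm M" and c: "c > 0"
  shows "is_L_norm (\<lambda>A. M A / c)"
proof -
  have M: "is_matrix_norm M" using L by (simp add: is_L_norm_def)
  have "M (A + B) / c \<le> M A / c + M B / c" for A B
    using divide_right_mono[OF is_matrix_normD(4)[OF M, of A B]] c by (simp add: add_divide_distrib)
  then have "is_matrix_norm (\<lambda>A. M A / c)"
    using c is_matrix_normD[OF M] by (simp add: is_matrix_norm_def)
  moreover have "(\<Sum>i<k. M (C i ** X ** madj (C i)) / c) \<le> M X / c"
    if "(\<Sum>i<k. madj (C i) ** C i) = mat 1" for k and C :: "nat \<Rightarrow> _" and X
    using divide_right_mono[OF is_L_normD[OF L that]] c by (simp add: sum_divide_distrib)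
  ultimately show ?thesis unfolding is_L_norm_def by blast
qed

section \<open>Maximality\<close>

lemma is_matrix_norm_zero: "is_matrix_norm M \<Longrightarrow> M 0 = 0"
  using is_matrix_normD(2) by blast

lemma is_matrix_norm_pos: "is_matrix_norm M \<Longrightarrow> A \<noteq> 0 \<Longrightarrow> 0 < M A"
  using is_matrix_normD(1,2) order_le_less by metis

lemma is_matrix_norm_scaleR: "is_matrix_norm M \<Longrightarrow> M (r *\<^sub>R A) = \<bar>r\<bar> * M A"
  by (simp add: is_matrix_norm_def scaleR_eq_msmult)

lemma convex_matrix_norm_sublevel:
  assumes "is_matrix_norm M"
  shows "convex {B. M B < r}"
proof (rule convexI, clarify)
  fix x y and u v :: real
  assume "M x < r" "M y < r" "0 \<le> u" "0 \<le> v" "u + v = 1"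
  then have "u * M x + v * M y \<le> u * max (M x) (M y) + v * max (M x) (M y)"
    by (intro add_mono mult_left_mono) auto
  also have "\<dots> < r" using \<open>M x < r\<close> \<open>M y < r\<close> \<open>u + v = 1\<close> by (simp flip: distrib_right)
  finally show "M (u *\<^sub>R x + v *\<^sub>R y) < r"
    using assms \<open>0 \<le> u\<close> \<open>0 \<le> v\<close>
    by (smt (verit) is_matrix_norm_def is_matrix_norm_scaleR)
qed

lemma inner_le_of_matrix_norm_sublevel:
  assumes M: "is_matrix_norm M" and r: "0 < r" and bound: "\<And>B. M B < r \<Longrightarrow> inner a B \<le> b"
  shows "inner a B \<le> b / r * M B"
proof (cases "B = 0")
  case True
  then show ?thesis using M by (simp add: is_matrix_norm_zero)
next
  case False
  then have MB: "M B > 0" using M by (rule is_matrix_norm_pos[rotated])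
  have "r / M B * inner a B \<le> b"
  proof (rule field_le_mult_one_interval)
    fix s :: real assume "0 < s" "s < 1"
    then have "M ((s * r / M B) *\<^sub>R B) < r"
      using MB r by (simp add: is_matrix_norm_scaleR[OF M])
    then have "inner a ((s * r / M B) *\<^sub>R B) \<le> b" by (rule bound)
    then show "s * (r / M B * inner a B) \<le> b" by simp
  qed
  then show ?thesis using MB r by (simp add: field_simps)
qed

lemma cmod_mtrace_le_of_inner_le:
  assumes M: "is_matrix_norm M" and le: "\<And>B. inner a B \<le> c * M B"
  shows "cmod (mtrace (madj a ** B)) \<le> c * M B"
proof -
  have nonneg: "0 \<le> c * M B"
    using le[of B] le[of "msmult (-1) B"]
    by (simp add: is_matrix_normD(3)[OF M] inner_eq_Re_mtrace msmult_mult_right mtrace_msmult)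
  define t where "t = mtrace (madj a ** B)"
  have "cmod t = inner a (msmult (cnj (sgn t)) B)"
    by (simp add: t_def inner_eq_Re_mtrace msmult_mult_right mtrace_msmult cnj_sgn_mult_self)
  also have "\<dots> \<le> c * M (msmult (cnj (sgn t)) B)" by (rule le)
  also have "\<dots> \<le> c * M B"
    using M nonneg by (cases "t = 0") (simp_all add: is_matrix_norm_zero is_matrix_normD(3) norm_sgn)
  finally show ?thesis by (simp add: t_def)
qed

text \<open>Hahn--Banach: a separating hyperplane between \<open>A\<close> and the open ball of radius \<open>M A\<close>.\<close>

lemma matrix_norm_norming_functional:
  fixes M :: "'n::finite cmat \<Rightarrow> real"
  assumes M: "is_matrix_norm M"
  obtains a where "\<And>B. cmod (mtrace (madj a ** B)) \<le> M B"
    and "M A \<le> cmod (mtrace (madj a ** A))"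
proof (cases "A = 0")
  case True
  then show ?thesis using that[of 0] is_matrix_normD(1)[OF M] by (simp add: is_matrix_norm_zero[OF M])
next
  case False
  then have MA: "M A > 0" using M by (rule is_matrix_norm_pos[rotated])
  have "0 \<in> {B. M B < M A}" using MA by (simp add: is_matrix_norm_zero[OF M])
  then obtain a b where "a \<noteq> 0" and below: "\<And>B. M B < M A \<Longrightarrow> inner a B \<le> b"
    and "b \<le> inner a A"
    using separating_hyperplane_sets[OF convex_matrix_norm_sublevel[OF M, of "M A"]
        convex_singleton[of A]]
    by auto
  have inner_le: "inner a B \<le> b / M A * M B" for B
    by (rule inner_le_of_matrix_norm_sublevel[OF M MA below])
  then have trace_le: "cmod (mtrace (madj a ** B)) \<le> b / M A * M B" for B
    by (rule cmod_mtrace_le_of_inner_le[OF M])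
  have "b > 0"
  proof (rule ccontr)
    assume "\<not> b > 0"
    then have "cmod (mtrace (madj a ** a)) \<le> 0"
      using trace_le[of a] MA is_matrix_normD(1)[OF M, of a]
      by (smt (verit) divide_nonpos_pos mult_nonpos_nonneg)
    with \<open>a \<noteq> 0\<close> show False by (simp add: mtrace_madj_mult_self)
  qed
  have "inner a A = b" using inner_le[of A] \<open>b \<le> inner a A\<close> MA by simp
  show ?thesis
  proof (rule that[of "msmult (of_real (M A / b)) a"])
    show "cmod (mtrace (madj (msmult (of_real (M A / b)) a) ** B)) \<le> M B" for B
      using trace_le[of B] MA \<open>b > 0\<close>
      by (simp add: madj_msmult msmult_mult_left mtrace_msmult norm_mult norm_divide field_simps)
    have "M A = M A / b * Re (mtrace (madj a ** A))"
      using \<open>inner a A = b\<close> \<open>b > 0\<close> by (simp add: inner_eq_Re_mtrace)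
    also have "\<dots> \<le> M A / b * cmod (mtrace (madj a ** A))"
      using MA \<open>b > 0\<close> by (intro mult_left_mono complex_Re_le_cmod) auto
    finally show "M A \<le> cmod (mtrace (madj (msmult (of_real (M A / b)) a) ** A))"
      using MA \<open>b > 0\<close>
      by (simp add: madj_msmult msmult_mult_left mtrace_msmult norm_mult norm_divide)
  qed
qed

lemma L_norm_outer_prod_le:
  fixes M :: "'n::finite cmat \<Rightarrow> real" and x :: "complex^'n"
  assumes L: "is_L_norm M" and x: "norm x = 1"
  shows "real CARD('n) * M (outer_prod x x) \<le> M (mat 1)"
proof -
  text \<open>Compress \<open>I\<close> by \<open>C\<^sub>i = x e\<^sub>i\<^sup>*\<close>, one term per standard basis vector \<open>e\<^sub>i\<close>.\<close>
  obtain f where f: "bij_betw f {..<CARD('n)} (UNIV::'n set)"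
    using ex_bij_betw_nat_finite[of "UNIV::'n set"] by (auto simp: atLeast0LessThan)
  define e where "e j = axis j (1::complex)" for j :: 'n
  have "cinner (e i) (e j) = (if i = j then 1 else 0)" for i j
    by (simp add: e_def cinner_axis_left) (simp add: axis_def)
  then have e: "orthonormal_on UNIV e" by (simp add: orthonormal_on_def)
  define C where "C i = outer_prod x (e (f i))" for i
  have xx: "cinner x x = 1" using x by (simp add: cinner_self)
  have "(\<Sum>i<CARD('n). madj (C i) ** C i) = (\<Sum>i<CARD('n). outer_prod (e (f i)) (e (f i)))"
    by (simp add: C_def madj_outer_prod outer_prod_mult xx)
  also have "\<dots> = (\<Sum>j\<in>UNIV. outer_prod (e j) (e j))"
    by (rule sum.reindex_bij_betw[OF f])
  also have "\<dots> = mat 1" by (rule sum_outer_prod_orthonormal[OF e])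
  finally have "(\<Sum>i<CARD('n). M (C i ** mat 1 ** madj (C i))) \<le> M (mat 1)"
    by (rule is_L_normD[OF L])
  moreover have "C i ** mat 1 ** madj (C i) = outer_prod x x" for i
    using e by (simp add: C_def madj_outer_prod outer_prod_mult orthonormal_on_def)
  ultimately show ?thesis by simp
qed

theorem L_norm_le_dual_num_radius:
  fixes M :: "'n::finite cmat \<Rightarrow> real"
  assumes L: "is_L_norm M"
  shows "M A \<le> M (mat 1) / real CARD('n) * dual_num_radius A"
proof -
  have M: "is_matrix_norm M" using L by (simp add: is_L_norm_def)
  obtain a where a: "\<And>B. cmod (mtrace (madj a ** B)) \<le> M B"
    and aA: "M A \<le> cmod (mtrace (madj a ** A))"
    using matrix_norm_norming_functional[OF M] by blast
  define m where "m = M (mat 1) / real CARD('n)"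
  have "m > 0" using is_matrix_norm_pos[OF M mat_1_neq_0] by (simp add: m_def)
  have "num_radius a \<le> m"
  proof (rule num_radius_least)
    fix x :: "complex^'n" assume x: "norm x = 1"
    have "cmod (cinner x (a *v x)) = cmod (mtrace (madj a ** outer_prod x x))"
      by (simp add: mtrace_mult_outer_prod cinner_madj_right cinner_commute[of x])
    also have "\<dots> \<le> M (outer_prod x x)" by (rule a)
    also have "\<dots> \<le> m" using L_norm_outer_prod_le[OF L x] by (simp add: m_def field_simps)
    finally show "cmod (cinner x (a *v x)) \<le> m" .
  qed
  then have "num_radius a / m \<le> 1" using \<open>m > 0\<close> by simp
  moreover have "num_radius (msmult (of_real (1 / m)) a) \<le> num_radius a / m"
    using num_radius_msmult_le[of "of_real (1 / m)" a] \<open>m > 0\<close> by (simp add: norm_divide)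
  ultimately have "num_radius (msmult (of_real (1 / m)) a) \<le> 1" by linarith
  then have "cmod (mtrace (madj A ** msmult (of_real (1 / m)) a)) \<le> dual_num_radius A"
    by (rule dual_num_radius_upper)
  then have "cmod (mtrace (madj a ** A)) \<le> m * dual_num_radius A"
    using \<open>m > 0\<close>
    by (simp add: msmult_mult_right mtrace_msmult norm_mult mtrace_madj_mult_commute[of A]
        norm_divide pos_divide_le_eq mult.commute)
  with aA show ?thesis by (simp add: m_def)
qed

theorem corollary3p8:
  fixes N :: "'n::finite cmat \<Rightarrow> real"
  defines "N \<equiv> (\<lambda>A. dual_num_radius A / real CARD('n))"
  shows "is_L_norm N \<and> (\<forall>A. N A \<le> op_norm A) \<and>
         (\<forall>M :: 'n cmat \<Rightarrow> real. is_L_norm M \<and> (\<forall>A. M A \<le> op_norm A) \<longrightarrow> (\<forall>A. M A \<le> N A))"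
proof (intro conjI allI impI)
  have n: "real CARD('n) > 0" by simp
  show "is_L_norm N" unfolding N_def by (rule is_L_norm_divide[OF is_L_norm_dual_num_radius n])
  show "N A \<le> op_norm A" for A
    using dual_num_radius_le_op_norm[of A] n by (simp add: N_def divide_le_eq mult.commute)
  fix M :: "'n cmat \<Rightarrow> real" and A :: "'n cmat"
  assume M: "is_L_norm M \<and> (\<forall>A. M A \<le> op_norm A)"
  then have "M (mat 1) \<le> 1" using op_norm_mat_1_le order_trans by blast
  then have "M (mat 1) * dual_num_radius A \<le> dual_num_radius A"
    using mult_right_mono[OF _ dual_num_radius_nonneg] by fastforce
  then have "M (mat 1) / real CARD('n) * dual_num_radius A \<le> N A"
    using n by (simp add: N_def divide_right_mono)
  with L_norm_le_dual_num_radius[of M A] M show "M A \<le> N A" by simp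
qed

end
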